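(* Let $\mathbf{A},\mathbf{B}\in\mathbb{R}^{n\times m}$ be two matrices of the same shape. Then $\|\mathbf{A}\circ\mathbf{B}\|_{\mathrm{tr}}\le\mu(\mathbf{A})^2\,\|\mathbf{A}\|_{\mathrm{tr}}\,\|\mathbf{B}\|_{\mathrm{tr}}$.
   Context: $\circ$ denotes the Hadamard (entrywise) product and $\|\cdot\|_{\mathrm{tr}}$ the trace (nuclear) norm. Coherence: for a matrix $\mathbf{M}\in\mathbb{R}^{n\times m}$ of rank $r$ with (compact) SVD $\mathbf{M}=\mathbf{U}\boldsymbol\Sigma\mathbf{V}^\top$ ($\mathbf{U}\in\mathbb{R}^{n\times r}$, $\mathbf{V}\in\mathbb{R}^{m\times r}$), $\mu(\mathbf{M})=\max\{\max_{1\le i\le n}\|\mathbf{U}_{i,*}\|,\max_{1\le j\le m}\|\mathbf{V}_{j,*}\|\}$, where $\mathbf{U}_{i,*}$, $\mathbf{V}_{j,*}$ are rows and $\|\cdot\|$ is the Euclidean norm (not normalized by the matrix size). *)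

theory Defs
  imports "Jordan_Normal_Form.Matrix"
begin

definition hadamard :: "real mat \<Rightarrow> real mat \<Rightarrow> real mat" where
  "hadamard A B = mat (dim_row A) (dim_col A) (\<lambda>(i,j). A $$ (i,j) * B $$ (i,j))"

definition compact_svd :: "real mat \<Rightarrow> real mat \<Rightarrow> real mat \<Rightarrow> real mat \<Rightarrow> bool" where
  "compact_svd M U S V \<longleftrightarrow> (\<exists>r.
     U \<in> carrier_mat (dim_row M) r \<and> V \<in> carrier_mat (dim_col M) r \<and>
     S \<in> carrier_mat r r \<and> diagonal_mat S \<and> (\<forall>i<r. S $$ (i,i) > 0) \<and>
     transpose_mat U * U = 1\<^sub>m r \<and> transpose_mat V * V = 1\<^sub>m r \<and>
     M = U * S * transpose_mat V)"

definition some_svd :: "real mat \<Rightarrow> real mat \<times> real mat \<times> real mat" where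
  "some_svd M = (SOME (U,S,V). compact_svd M U S V)"

definition trace_norm :: "real mat \<Rightarrow> real" where
  "trace_norm M = (case some_svd M of (U,S,V) \<Rightarrow> (\<Sum>i<dim_row S. S $$ (i,i)))"

definition row_norm :: "real mat \<Rightarrow> nat \<Rightarrow> real" where
  "row_norm U i = sqrt (\<Sum>j<dim_col U. (U $$ (i,j))\<^sup>2)"

text \<open>Coherence (unnormalized): max Euclidean row norm of U and V in the compact SVD.
  0 is included only to make Max well-defined when there are no rows.\<close>
definition coherence :: "real mat \<Rightarrow> real" where
  "coherence M = (case some_svd M of (U,S,V) \<Rightarrow>
     Max ({0} \<union> row_norm U ` {..<dim_row U} \<union> row_norm V ` {..<dim_row V}))"

end

theory Submission
  imports Defs "Jordan_Normal_Form.Spectral_Radius" "HOL-Analysis.L2_Norm"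
begin

text \<open>Write compact SVDs \<open>A = \<Sum>\<^sub>k \<sigma>\<^sub>k p\<^sub>k q\<^sub>k\<^sup>T\<close> and \<open>B = \<Sum>\<^sub>l \<tau>\<^sub>l x\<^sub>l y\<^sub>l\<^sup>T\<close>.
  Then \<open>A \<circ> B = \<Sum>\<^sub>k\<^sub>,\<^sub>l \<sigma>\<^sub>k \<tau>\<^sub>l (p\<^sub>k \<circ> x\<^sub>l) (q\<^sub>k \<circ> y\<^sub>l)\<^sup>T\<close>. Pairing with the singular
  vectors of \<open>A \<circ> B\<close>, Cauchy-Schwarz and Bessel's inequality show that the trace norm of a
  nonnegative combination of rank-one matrices \<open>a b\<^sup>T\<close> is at most the same combination of
  \<open>\<parallel>a\<parallel> \<parallel>b\<parallel>\<close>. Every entry of \<open>p\<^sub>k\<close> is bounded by \<open>\<mu>(A)\<close> and \<open>x\<^sub>l\<close> is a unit vector, so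
  \<open>\<parallel>p\<^sub>k \<circ> x\<^sub>l\<parallel> \<le> \<mu>(A)\<close>, and likewise \<open>\<parallel>q\<^sub>k \<circ> y\<^sub>l\<parallel> \<le> \<mu>(A)\<close>; summing gives the bound.
  Compact SVDs, on which trace norm and coherence depend, exist by the spectral theorem applied
  to \<open>M\<^sup>T M\<close>; it follows by deflation along a real eigenvector, which exists because the
  eigenvalues of a real symmetric matrix are real.\<close>

lemma real_scalar_prod_self_pos_iff:
  fixes x :: "real vec"
  assumes "x \<in> carrier_vec n"
  shows "x \<bullet> x > 0 \<longleftrightarrow> x \<noteq> 0\<^sub>v n"
  using conjugate_square_greater_0_vec[OF assms] by simp

lemma symmetric_scalar_prod_mult_mat_vec:
  fixes S :: "'a :: comm_semiring_0 mat"
  assumes S: "S \<in> carrier_mat n n" and sym: "transpose_mat S = S"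
    and x: "x \<in> carrier_vec n" and y: "y \<in> carrier_vec n"
  shows "y \<bullet> (S *\<^sub>v x) = x \<bullet> (S *\<^sub>v y)"
  using transpose_vec_mult_scalar[OF S x y] S x y
  by (simp add: sym comm_scalar_prod[of _ n])

lemma real_symmetric_has_eigenvector:
  fixes S :: "real mat"
  assumes S: "S \<in> carrier_mat n n" and sym: "transpose_mat S = S" and n: "n > 0"
  shows "\<exists>a x. x \<in> carrier_vec n \<and> x \<noteq> 0\<^sub>v n \<and> S *\<^sub>v x = a \<cdot>\<^sub>v x"
proof -
  define CS where "CS = map_mat complex_of_real S"
  have CS: "CS \<in> carrier_mat n n" using S unfolding CS_def by auto
  from spectrum_non_empty[OF CS n] obtain mu where "mu \<in> spectrum CS" by auto
  then obtain v where v: "v \<in> carrier_vec n" "v \<noteq> 0\<^sub>v n" "CS *\<^sub>v v = mu \<cdot>\<^sub>v v"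
    unfolding spectrum_def eigenvalue_def eigenvector_def using CS by auto
  define x where "x = vec n (\<lambda>i. Re (v $ i))"
  define y where "y = vec n (\<lambda>i. Im (v $ i))"
  have x: "x \<in> carrier_vec n" and y: "y \<in> carrier_vec n" unfolding x_def y_def by auto
  have "(S *\<^sub>v x) $ i = Re ((CS *\<^sub>v v) $ i)" "(S *\<^sub>v y) $ i = Im ((CS *\<^sub>v v) $ i)" if "i < n" for i
    using that S v(1) by (simp_all add: CS_def x_def y_def scalar_prod_def)
  then have Sx: "S *\<^sub>v x = Re mu \<cdot>\<^sub>v x - Im mu \<cdot>\<^sub>v y"
    and Sy: "S *\<^sub>v y = Im mu \<cdot>\<^sub>v x + Re mu \<cdot>\<^sub>v y"
    using S v(1,3) by (auto simp: x_def y_def)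
  \<comment> \<open>with \<open>v = x + i y\<close>, symmetry of \<open>S\<close> forces the eigenvalue to be real\<close>
  have "y \<bullet> (S *\<^sub>v x) = x \<bullet> (S *\<^sub>v y)"
    by (rule symmetric_scalar_prod_mult_mat_vec[OF S sym x y])
  then have "Im mu * (x \<bullet> x + y \<bullet> y) = 0"
    unfolding Sx Sy using x y
    by (simp add: scalar_prod_add_distrib[of _ n] scalar_prod_minus_distrib[of _ n]
        comm_scalar_prod[of y n x] algebra_simps)
  moreover have "x \<noteq> 0\<^sub>v n \<or> y \<noteq> 0\<^sub>v n"
    using v(1,2) by (auto simp: x_def y_def complex_eq_iff vec_eq_iff)
  then have "x \<bullet> x + y \<bullet> y > 0"
    using real_scalar_prod_self_pos_iff[OF x] real_scalar_prod_self_pos_iff[OF y]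
      conjugate_square_ge_0_vec[of x] conjugate_square_ge_0_vec[of y] by auto
  ultimately have "Im mu = 0" by simp
  then have "S *\<^sub>v x = Re mu \<cdot>\<^sub>v x" "S *\<^sub>v y = Re mu \<cdot>\<^sub>v y"
    using x y unfolding Sx Sy by auto
  then show ?thesis using x y \<open>x \<noteq> 0\<^sub>v n \<or> y \<noteq> 0\<^sub>v n\<close> by blast
qed

lemma unit_vec_extends_to_orthogonal_mat:
  fixes w :: "real vec"
  assumes w: "w \<in> carrier_vec n" and w1: "w \<bullet> w = 1"
  shows "\<exists>W \<in> carrier_mat n n. transpose_mat W * W = 1\<^sub>m n \<and> col W 0 = w"
proof -
  interpret cof_vec_space n "TYPE(real)" .
  have w0: "w \<noteq> 0\<^sub>v n" using w1 w by auto
  then have n: "n > 0" using w by (cases n) auto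
  define b where "b = basis_completion w"
  note bc = basis_completion[OF w w0, folded b_def]
  from bc(6,7) n obtain vs where b: "b = w # vs" by (cases b) auto
  define ws where "ws = gram_schmidt n b"
  note gs = gram_schmidt_result[OF bc(2,4,5) ws_def]
  have len: "length ws = n" using gs(4) bc(6) by simp
  have "ws \<noteq> []" using len n by auto
  then have ws0: "ws ! 0 = w"
    using gram_schmidt_hd[OF w, of vs] by (simp add: ws_def b hd_conv_nth)
  have wsc: "i < n \<Longrightarrow> ws ! i \<in> carrier_vec n" for i using gs(3) len by auto
  have orth: "i < n \<Longrightarrow> j < n \<Longrightarrow> ws ! i \<bullet> ws ! j = 0 \<longleftrightarrow> i \<noteq> j" for i j
    using gs(2) len by (simp add: corthogonal_def)
  define nr where "nr i = sqrt (ws ! i \<bullet> ws ! i)" for i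
  have nr: "i < n \<Longrightarrow> nr i * nr i = ws ! i \<bullet> ws ! i \<and> nr i > 0" for i
    using real_scalar_prod_self_pos_iff[OF wsc, of i] orth[of i i] unfolding nr_def by auto
  define W where "W = mat n n (\<lambda>(i,j). ws ! j $ i / nr j)"
  have "transpose_mat W * W = 1\<^sub>m n"
  proof (rule eq_matI)
    fix i j assume "i < dim_row (1\<^sub>m n :: real mat)" "j < dim_col (1\<^sub>m n :: real mat)"
    then have i: "i < n" and j: "j < n" by auto
    have "(transpose_mat W * W) $$ (i,j) = ws ! i \<bullet> ws ! j / (nr i * nr j)"
      using i j wsc[OF j] unfolding W_def by (simp add: scalar_prod_def sum_divide_distrib)
    then show "(transpose_mat W * W) $$ (i,j) = 1\<^sub>m n $$ (i,j)"
      using orth[OF i j] nr[OF i] i j by auto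
  qed (auto simp: W_def)
  moreover have "col W 0 = w"
    using n w nr[of 0] w1 unfolding W_def ws0 by (intro eq_vecI) (auto simp: nr_def ws0)
  ultimately show ?thesis unfolding W_def by auto
qed

lemma orthogonal_mult_mat:
  fixes W Q :: "'a :: comm_ring_1 mat"
  assumes W: "W \<in> carrier_mat n n" "transpose_mat W * W = 1\<^sub>m n"
    and Q: "Q \<in> carrier_mat n n" "transpose_mat Q * Q = 1\<^sub>m n"
  shows "transpose_mat (W * Q) * (W * Q) = 1\<^sub>m n"
proof -
  have "transpose_mat (W * Q) * (W * Q) = transpose_mat Q * (transpose_mat W * (W * Q))"
    using W Q by (simp add: transpose_mult[of _ n n] assoc_mult_mat[of _ n n _ n _ n])
  also have "transpose_mat W * (W * Q) = (transpose_mat W * W) * Q"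
    by (rule assoc_mult_mat[symmetric]) (use W Q in auto)
  finally show ?thesis using W Q by simp
qed

lemma orthogonal_four_block_mat_one:
  fixes Q :: "'a :: comm_ring_1 mat"
  assumes Q: "Q \<in> carrier_mat n n" "transpose_mat Q * Q = 1\<^sub>m n"
  shows "transpose_mat (four_block_mat (1\<^sub>m 1) (0\<^sub>m 1 n) (0\<^sub>m n 1) Q)
      * four_block_mat (1\<^sub>m 1) (0\<^sub>m 1 n) (0\<^sub>m n 1) Q = 1\<^sub>m (Suc n)"
proof -
  have "transpose_mat (four_block_mat (1\<^sub>m 1) (0\<^sub>m 1 n) (0\<^sub>m n 1) Q)
      * four_block_mat (1\<^sub>m 1) (0\<^sub>m 1 n) (0\<^sub>m n 1) Q
      = four_block_mat (1\<^sub>m 1) (0\<^sub>m 1 n) (0\<^sub>m n 1) (transpose_mat Q * Q)"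
    using Q by (subst transpose_four_block_mat, auto, subst mult_four_block_mat, auto)
  also have "\<dots> = 1\<^sub>m (Suc n)" unfolding Q(2) by (rule eq_matI) auto
  finally show ?thesis .
qed

lemma symmetric_congruence:
  fixes S W :: "'a :: comm_ring_1 mat"
  assumes S: "S \<in> carrier_mat n n" and sym: "transpose_mat S = S" and W: "W \<in> carrier_mat n k"
  shows "transpose_mat (transpose_mat W * S * W) = transpose_mat W * S * W"
proof -
  have "transpose_mat (transpose_mat W * S * W) = transpose_mat W * (transpose_mat S * W)"
    using S W by (simp add: transpose_mult[of _ k n] transpose_mult[of _ n n] del: assoc_mult_mat)
  then show ?thesis using S W sym by simp
qed

lemma orthogonal_deflation:
  fixes S W :: "'a :: field mat"
  assumes S: "S \<in> carrier_mat (Suc n) (Suc n)" and sym: "transpose_mat S = S"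
    and W: "W \<in> carrier_mat (Suc n) (Suc n)" "transpose_mat W * W = 1\<^sub>m (Suc n)"
    and ev: "S *\<^sub>v col W 0 = a \<cdot>\<^sub>v col W 0"
  obtains S' where "S' \<in> carrier_mat n n" "transpose_mat S' = S'"
    "transpose_mat W * S * W = four_block_mat (mat 1 1 (\<lambda>_. a)) (0\<^sub>m 1 n) (0\<^sub>m n 1) S'"
proof
  define A where "A = transpose_mat W * S * W"
  have A: "A \<in> carrier_mat (Suc n) (Suc n)" using W S unfolding A_def by auto
  have A_sym: "transpose_mat A = A"
    unfolding A_def by (rule symmetric_congruence[OF S sym W(1)])
  have "col A 0 = (transpose_mat W * S) *\<^sub>v col W 0"
    unfolding A_def by (rule col_mult2[of _ _ "Suc n"]) (use W S in auto)
  also have "\<dots> = transpose_mat W *\<^sub>v (S *\<^sub>v col W 0)"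
    by (rule assoc_mult_mat_vec) (use W S in \<open>auto simp: col_def\<close>)
  also have "\<dots> = a \<cdot>\<^sub>v (transpose_mat W *\<^sub>v col W 0)"
    unfolding ev by (rule mult_mat_vec) (use W in \<open>auto simp: col_def\<close>)
  also have "transpose_mat W *\<^sub>v col W 0 = col (transpose_mat W * W) 0"
    by (rule col_mult2[symmetric]) (use W in auto)
  finally have "col A 0 = a \<cdot>\<^sub>v unit_vec (Suc n) 0" using W by simp
  then have col0: "i < Suc n \<Longrightarrow> A $$ (i,0) = (if i = 0 then a else 0)" for i
    using A by (auto simp: vec_eq_iff)
  have row0: "j < Suc n \<Longrightarrow> A $$ (0,j) = (if j = 0 then a else 0)" for j
    using col0[of j] arg_cong[OF A_sym, of "\<lambda>M. M $$ (j,0)"] A by auto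
  define S' where "S' = mat n n (\<lambda>(i,j). A $$ (Suc i, Suc j))"
  show "S' \<in> carrier_mat n n" unfolding S'_def by auto
  show "transpose_mat S' = S'"
    using A_sym A unfolding S'_def by (auto simp: mat_eq_iff)
  show "transpose_mat W * S * W = four_block_mat (mat 1 1 (\<lambda>_. a)) (0\<^sub>m 1 n) (0\<^sub>m n 1) S'"
    using A col0 row0 unfolding A_def[symmetric] S'_def by (auto simp: mat_eq_iff)
qed

lemma real_symmetric_orthogonally_diagonalizable:
  fixes S :: "real mat"
  assumes "S \<in> carrier_mat n n" and "transpose_mat S = S"
  shows "\<exists>Q \<in> carrier_mat n n. transpose_mat Q * Q = 1\<^sub>m n \<and> diagonal_mat (transpose_mat Q * S * Q)"
  using assms
proof (induction n arbitrary: S)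
  case 0
  then show ?case by (intro bexI[of _ "1\<^sub>m 0"]) (auto simp: diagonal_mat_def)
next
  case (Suc n)
  note S = Suc.prems(1) and sym = Suc.prems(2)
  obtain a x where x: "x \<in> carrier_vec (Suc n)" "x \<noteq> 0\<^sub>v (Suc n)" and Sx: "S *\<^sub>v x = a \<cdot>\<^sub>v x"
    using real_symmetric_has_eigenvector[OF S sym] by blast
  define w where "w = (1 / sqrt (x \<bullet> x)) \<cdot>\<^sub>v x"
  have xx: "x \<bullet> x > 0" using real_scalar_prod_self_pos_iff[OF x(1)] x(2) by simp
  have w: "w \<in> carrier_vec (Suc n)" "w \<bullet> w = 1" "S *\<^sub>v w = a \<cdot>\<^sub>v w"
    using x(1) xx S Sx unfolding w_def
    by (auto simp: smult_scalar_prod_distrib scalar_prod_smult_distrib mult_mat_vec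
        smult_smult_assoc mult.commute power2_eq_square[symmetric])
  obtain W where W: "W \<in> carrier_mat (Suc n) (Suc n)" "transpose_mat W * W = 1\<^sub>m (Suc n)" "col W 0 = w"
    using unit_vec_extends_to_orthogonal_mat[OF w(1,2)] by blast
  obtain S' where S': "S' \<in> carrier_mat n n" "transpose_mat S' = S'"
    and WSW: "transpose_mat W * S * W = four_block_mat (mat 1 1 (\<lambda>_. a)) (0\<^sub>m 1 n) (0\<^sub>m n 1) S'"
    using orthogonal_deflation[OF S sym W(1,2)] W(3) w(3) by metis
  obtain Q' where Q': "Q' \<in> carrier_mat n n" "transpose_mat Q' * Q' = 1\<^sub>m n"
    and diag': "diagonal_mat (transpose_mat Q' * S' * Q')"
    using Suc.IH[OF S'] by blast
  define R where "R = four_block_mat (1\<^sub>m 1) (0\<^sub>m 1 n) (0\<^sub>m n 1) Q'"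
  have R: "R \<in> carrier_mat (Suc n) (Suc n)" "transpose_mat R * R = 1\<^sub>m (Suc n)"
    using Q' orthogonal_four_block_mat_one[OF Q'] unfolding R_def by auto
  have "transpose_mat (W * R) * S * (W * R) = transpose_mat R * (transpose_mat W * S * W) * R"
    using W(1) R(1) S
    by (simp add: transpose_mult[of _ "Suc n" "Suc n"] assoc_mult_mat[of _ "Suc n" "Suc n" _ "Suc n" _ "Suc n"])
  also have "\<dots> = four_block_mat (mat 1 1 (\<lambda>_. a)) (0\<^sub>m 1 n) (0\<^sub>m n 1) (transpose_mat Q' * S' * Q')"
    unfolding WSW R_def using Q' S'
    by (subst transpose_four_block_mat, auto, subst mult_four_block_mat, auto,
        subst mult_four_block_mat, auto)
  finally have "diagonal_mat (transpose_mat (W * R) * S * (W * R))"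
    using diag' Q' S' by (auto simp: diagonal_mat_def)
  moreover have "W * R \<in> carrier_mat (Suc n) (Suc n)" using W R by auto
  ultimately show ?case using orthogonal_mult_mat[OF W(1,2) R] by blast
qed

lemma diagonal_mat_sandwich_entry:
  fixes U S V :: "'a :: comm_semiring_0 mat"
  assumes U: "U \<in> carrier_mat n r" and V: "V \<in> carrier_mat m r" and S: "S \<in> carrier_mat r r"
    and diag: "diagonal_mat S" and i: "i < n" and j: "j < m"
  shows "(U * S * transpose_mat V) $$ (i,j) = (\<Sum>k<r. U $$ (i,k) * S $$ (k,k) * V $$ (j,k))"
proof -
  have US: "(U * S) $$ (i,k) = U $$ (i,k) * S $$ (k,k)" if k: "k < r" for k
  proof -
    have "(U * S) $$ (i,k) = (\<Sum>l<r. U $$ (i,l) * S $$ (l,k))"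
      using i k U S by (simp add: scalar_prod_def atLeast0LessThan)
    also have "\<dots> = (\<Sum>l<r. if l = k then U $$ (i,k) * S $$ (k,k) else 0)"
      by (rule sum.cong) (use diag S k in \<open>auto simp: diagonal_mat_def\<close>)
    finally show ?thesis using k by simp
  qed
  have "(U * S * transpose_mat V) $$ (i,j) = (\<Sum>k<r. (U * S) $$ (i,k) * V $$ (j,k))"
    using i j U S V by (simp add: scalar_prod_def atLeast0LessThan del: assoc_mult_mat)
  then show ?thesis by (simp add: US)
qed

lemma orthonormal_scaled_columns:
  fixes N :: "real mat"
  assumes N: "N \<in> carrier_mat n m" and ks: "distinct ks" "set ks \<subseteq> {..<m}"
    and NN: "\<And>k l. k \<in> set ks \<Longrightarrow> l \<in> set ks \<Longrightarrow>
      (transpose_mat N * N) $$ (k,l) = (if k = l then (c k)\<^sup>2 else 0)"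
    and c: "\<And>k. k \<in> set ks \<Longrightarrow> c k \<noteq> 0"
  defines "U \<equiv> mat n (length ks) (\<lambda>(i,b). N $$ (i, ks ! b) / c (ks ! b))"
  shows "transpose_mat U * U = 1\<^sub>m (length ks)"
proof (rule eq_matI)
  fix a b assume "a < dim_row (1\<^sub>m (length ks) :: real mat)" "b < dim_col (1\<^sub>m (length ks) :: real mat)"
  then have a: "a < length ks" and b: "b < length ks" by auto
  have "ks ! a < m" "ks ! b < m" using ks(2) nth_mem[OF a] nth_mem[OF b] by auto
  then have "(transpose_mat U * U) $$ (a,b) = (transpose_mat N * N) $$ (ks ! a, ks ! b) / (c (ks ! a) * c (ks ! b))"
    using a b N unfolding U_def by (simp add: scalar_prod_def sum_divide_distrib)
  then show "(transpose_mat U * U) $$ (a,b) = 1\<^sub>m (length ks) $$ (a,b)"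
    using NN[OF nth_mem[OF a] nth_mem[OF b]] c[OF nth_mem[OF a]] c[OF nth_mem[OF b]] ks(1) a b
    by (simp add: nth_eq_iff_index_eq power2_eq_square)
qed (auto simp: U_def)

lemma compact_svd_of_orthogonal_columns:
  fixes N Q :: "real mat"
  assumes N: "N \<in> carrier_mat n m" and orth: "diagonal_mat (transpose_mat N * N)"
    and Q: "Q \<in> carrier_mat k m" and QQ: "transpose_mat Q * Q = 1\<^sub>m m"
  shows "\<exists>U S V. compact_svd (N * transpose_mat Q) U S V"
proof -
  define d where "d l = (transpose_mat N * N) $$ (l,l)" for l
  have d_zero: "N $$ (i,l) = 0" if "i < n" "l < m" "\<not> d l > 0" for i l
  proof -
    have "d l = (\<Sum>i<n. (N $$ (i,l))\<^sup>2)"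
      using N that(2) by (simp add: d_def scalar_prod_def atLeast0LessThan power2_eq_square)
    then show ?thesis using that sum_nonneg_eq_0_iff[of "{..<n}" "\<lambda>i. (N $$ (i,l))\<^sup>2"]
      by (simp add: sum_nonneg order.antisym not_less)
  qed
  \<comment> \<open>only the nonzero columns of \<open>N\<close> contribute: \<open>S\<close> must have a positive diagonal\<close>
  define ks where "ks = filter (\<lambda>l. d l > 0) [0..<m]"
  define r where "r = length ks"
  have ks: "distinct ks" "set ks \<subseteq> {..<m}" "\<And>l. l \<in> set ks \<Longrightarrow> d l > 0"
    unfolding ks_def by auto
  define U where "U = mat n r (\<lambda>(i,b). N $$ (i, ks ! b) / sqrt (d (ks ! b)))"
  define S where "S = mat r r (\<lambda>(a,b). if a = b then sqrt (d (ks ! a)) else 0)"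
  define V where "V = mat k r (\<lambda>(j,b). Q $$ (j, ks ! b))"
  have carrier: "U \<in> carrier_mat n r" "S \<in> carrier_mat r r" "V \<in> carrier_mat k r"
    unfolding U_def S_def V_def by auto
  have diag: "diagonal_mat S" unfolding S_def diagonal_mat_def by auto
  have pos: "\<forall>b<r. S $$ (b,b) > 0" using ks(3) nth_mem unfolding S_def r_def by auto
  have off_diag: "(transpose_mat N * N) $$ (k,l) = 0" if "k < m" "l < m" "k \<noteq> l" for k l
    using orth N that unfolding diagonal_mat_def by (metis carrier_matD(2) index_mult_mat(2,3) index_transpose_mat(2))
  have "transpose_mat U * U = 1\<^sub>m r"
    unfolding U_def r_def
  proof (rule orthonormal_scaled_columns[OF N ks(1,2)])
    fix l l' assume "l \<in> set ks" "l' \<in> set ks"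
    then show "(transpose_mat N * N) $$ (l,l') = (if l = l' then (sqrt (d l))\<^sup>2 else 0)"
      using off_diag ks(2,3) by (auto simp: d_def less_imp_le)
  qed (use ks(3) in fastforce)
  moreover have "transpose_mat V * V = 1\<^sub>m r"
  proof -
    have "transpose_mat (mat k r (\<lambda>(j,b). Q $$ (j, ks ! b) / 1)) * mat k r (\<lambda>(j,b). Q $$ (j, ks ! b) / 1)
        = 1\<^sub>m r"
      unfolding r_def by (rule orthonormal_scaled_columns[OF Q ks(1,2)]) (use QQ ks(2) in \<open>auto simp: subset_iff\<close>)
    then show ?thesis unfolding V_def by simp
  qed
  moreover have "N * transpose_mat Q = U * S * transpose_mat V"
  proof (rule eq_matI)
    fix i j assume "i < dim_row (U * S * transpose_mat V)" "j < dim_col (U * S * transpose_mat V)"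
    then have i: "i < n" and j: "j < k" using carrier Q by auto
    have "(U * S * transpose_mat V) $$ (i,j) = (\<Sum>b<r. N $$ (i, ks ! b) * Q $$ (j, ks ! b))"
      using diagonal_mat_sandwich_entry[OF carrier(1,3,2) diag i j] pos i j
      by (auto simp: U_def S_def V_def intro!: sum.cong)
    also have "\<dots> = (\<Sum>l\<in>set ks. N $$ (i,l) * Q $$ (j,l))"
      unfolding r_def by (rule sum.reindex_bij_betw[OF bij_betw_nth[OF ks(1)]]) auto
    also have "\<dots> = (\<Sum>l<m. N $$ (i,l) * Q $$ (j,l))"
      by (rule sum.mono_neutral_left) (use d_zero i in \<open>auto simp: ks_def\<close>)
    also have "\<dots> = (N * transpose_mat Q) $$ (i,j)"
      using i j N Q by (simp add: scalar_prod_def atLeast0LessThan)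
    finally show "(N * transpose_mat Q) $$ (i,j) = (U * S * transpose_mat V) $$ (i,j)" ..
  qed (use carrier N Q in auto)
  ultimately show ?thesis unfolding compact_svd_def
    using carrier diag pos N Q by (intro exI[of _ U] exI[of _ S] exI[of _ V] exI[of _ r]) auto
qed

lemma compact_svd_exists:
  fixes M :: "real mat"
  assumes M: "M \<in> carrier_mat n m"
  shows "\<exists>U S V. compact_svd M U S V"
proof -
  have G: "transpose_mat M * M \<in> carrier_mat m m" using M by auto
  have "transpose_mat (transpose_mat M * M) = transpose_mat M * M"
    using M by (simp add: transpose_mult[of _ m n])
  then obtain Q where Q: "Q \<in> carrier_mat m m" "transpose_mat Q * Q = 1\<^sub>m m"
    and diag: "diagonal_mat (transpose_mat Q * (transpose_mat M * M) * Q)"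
    using real_symmetric_orthogonally_diagonalizable[OF G] by blast
  have "Q * transpose_mat Q = 1\<^sub>m m"
    using mat_mult_left_right_inverse[OF _ _ Q(2)] Q(1) by auto
  then have "M = (M * Q) * transpose_mat Q"
    using M Q(1) by (simp add: assoc_mult_mat[of _ n m _ m _ m])
  moreover have "diagonal_mat (transpose_mat (M * Q) * (M * Q))"
    using diag M Q(1) by (simp add: transpose_mult[of _ n m] assoc_mult_mat[of _ m n _ m _ m]
      assoc_mult_mat[of _ m m _ m _ m] assoc_mult_mat[of _ m m _ n _ m])
  ultimately show ?thesis
    using compact_svd_of_orthogonal_columns[of "M * Q" n m Q m] M Q by auto
qed

lemma compact_svd_some_svd:
  assumes "M \<in> carrier_mat n m" and "some_svd M = (U,S,V)"
  shows "compact_svd M U S V"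
proof -
  obtain U0 S0 V0 where "compact_svd M U0 S0 V0" using compact_svd_exists[OF assms(1)] by blast
  then have "\<exists>x. (\<lambda>(U,S,V). compact_svd M U S V) x" by auto
  from someI_ex[OF this] show ?thesis using assms(2) unfolding some_svd_def by simp
qed

lemma compact_svdE:
  assumes "compact_svd M U S V" and "M \<in> carrier_mat n m"
  obtains r where "U \<in> carrier_mat n r" "V \<in> carrier_mat m r" "S \<in> carrier_mat r r"
    "diagonal_mat S" "\<forall>i<r. S $$ (i,i) > 0" "transpose_mat U * U = 1\<^sub>m r" "transpose_mat V * V = 1\<^sub>m r"
    "M = U * S * transpose_mat V"
  using assms unfolding compact_svd_def by auto

lemma singular_value_eq_sum:
  fixes U S V :: "'a :: comm_ring_1 mat"
  assumes U: "U \<in> carrier_mat n r" "transpose_mat U * U = 1\<^sub>m r"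
    and V: "V \<in> carrier_mat m r" "transpose_mat V * V = 1\<^sub>m r"
    and S: "S \<in> carrier_mat r r" and s: "s < r"
  shows "S $$ (s,s) = (\<Sum>i<n. \<Sum>j<m. U $$ (i,s) * (U * S * transpose_mat V) $$ (i,j) * V $$ (j,s))"
proof -
  define M where "M = U * S * transpose_mat V"
  have M: "M \<in> carrier_mat n m" using U V S unfolding M_def by auto
  have "transpose_mat U * M * V = (transpose_mat U * U) * S * (transpose_mat V * V)"
    unfolding M_def using U(1) V(1) S
    by (simp add: assoc_mult_mat[of _ n r _ r _ m] assoc_mult_mat[of _ r n _ m _ r]
      assoc_mult_mat[of _ n r _ m _ r] assoc_mult_mat[of _ r r _ m _ r]
      assoc_mult_mat[of _ r n _ r _ r] assoc_mult_mat[of _ n r _ r _ r])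
  also have "\<dots> = S" using S by (simp add: U(2) V(2) del: assoc_mult_mat)
  finally have "S $$ (s,s) = (transpose_mat U * M * V) $$ (s,s)" by simp
  also have "\<dots> = (\<Sum>j<m. (\<Sum>i<n. U $$ (i,s) * M $$ (i,j)) * V $$ (j,s))"
    using s U V M by (simp add: scalar_prod_def atLeast0LessThan del: assoc_mult_mat)
  also have "\<dots> = (\<Sum>i<n. \<Sum>j<m. U $$ (i,s) * M $$ (i,j) * V $$ (j,s))"
    by (simp add: sum_distrib_right sum.swap[of _ "{..<m}"])
  finally show ?thesis unfolding M_def .
qed

lemma orthonormal_columns_bessel:
  fixes U :: "real mat"
  assumes U: "U \<in> carrier_mat n r" and UU: "transpose_mat U * U = 1\<^sub>m r"
  shows "L2_set (\<lambda>s. \<Sum>i<n. U $$ (i,s) * x i) {..<r} \<le> L2_set x {..<n}"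
proof -
  \<comment> \<open>\<open>z = U y\<close> is the projection of \<open>x\<close>:
    \<open>\<langle>x, z\<rangle> = \<parallel>y\<parallel>\<^sup>2 = \<parallel>z\<parallel>\<^sup>2\<close>, so Cauchy-Schwarz gives \<open>\<parallel>y\<parallel> \<le> \<parallel>x\<parallel>\<close>\<close>
  define y where "y s = (\<Sum>i<n. U $$ (i,s) * x i)" for s
  define z where "z i = (\<Sum>s<r. U $$ (i,s) * y s)" for i
  have UU_entry: "(\<Sum>i<n. U $$ (i,s) * U $$ (i,t)) = (if s = t then 1 else 0)" if "s < r" "t < r" for s t
    using arg_cong[OF UU, of "\<lambda>A. A $$ (s,t)"] that U by (simp add: scalar_prod_def atLeast0LessThan)
  have xz: "(\<Sum>i<n. x i * z i) = (\<Sum>s<r. (y s)\<^sup>2)"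
    unfolding z_def y_def power2_eq_square
    by (simp add: sum_distrib_left sum_distrib_right sum.swap[of _ "{..<r}"] mult_ac)
  have Uz: "(\<Sum>i<n. U $$ (i,s) * z i) = y s" if s: "s < r" for s
  proof -
    have "(\<Sum>i<n. U $$ (i,s) * z i) = (\<Sum>t<r. y t * (\<Sum>i<n. U $$ (i,s) * U $$ (i,t)))"
      unfolding z_def by (simp add: sum_distrib_left sum.swap[of _ "{..<r}"] mult_ac)
    also have "\<dots> = (\<Sum>t<r. if t = s then y t else 0)"
      by (rule sum.cong) (auto simp: UU_entry s)
    also have "\<dots> = y s" using s by simp
    finally show ?thesis .
  qed
  have "(\<Sum>i<n. (z i)\<^sup>2) = (\<Sum>i<n. z i * (\<Sum>s<r. U $$ (i,s) * y s))"
    by (simp add: power2_eq_square z_def)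
  also have "\<dots> = (\<Sum>s<r. y s * (\<Sum>i<n. U $$ (i,s) * z i))"
    by (simp add: sum_distrib_left sum.swap[of _ "{..<r}"] mult_ac)
  finally have zz: "(\<Sum>i<n. (z i)\<^sup>2) = (\<Sum>s<r. (y s)\<^sup>2)"
    by (simp add: Uz power2_eq_square)
  have "(L2_set y {..<r})\<^sup>2 = (\<Sum>i<n. x i * z i)"
    unfolding L2_set_def xz by (simp add: sum_nonneg)
  also have "\<dots> \<le> (\<Sum>i<n. \<bar>x i\<bar> * \<bar>z i\<bar>)"
    by (rule sum_mono) (simp flip: abs_mult)
  also have "\<dots> \<le> L2_set x {..<n} * L2_set z {..<n}" by (rule L2_set_mult_ineq)
  also have "L2_set z {..<n} = L2_set y {..<r}" unfolding L2_set_def zz ..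
  finally have "L2_set y {..<r} * L2_set y {..<r} \<le> L2_set x {..<n} * L2_set y {..<r}"
    by (simp add: power2_eq_square)
  then have "L2_set y {..<r} \<le> L2_set x {..<n}"
    using L2_set_nonneg[of y "{..<r}"] L2_set_nonneg[of x "{..<n}"]
    by (cases "L2_set y {..<r} = 0") (auto intro: mult_right_le_imp_le)
  then show ?thesis unfolding y_def[abs_def] .
qed

lemma orthonormal_columns_coeff_prod_le:
  fixes U V :: "real mat"
  assumes U: "U \<in> carrier_mat n r" "transpose_mat U * U = 1\<^sub>m r"
    and V: "V \<in> carrier_mat m r" "transpose_mat V * V = 1\<^sub>m r"
  shows "(\<Sum>s<r. (\<Sum>i<n. U $$ (i,s) * x i) * (\<Sum>j<m. V $$ (j,s) * y j))
    \<le> L2_set x {..<n} * L2_set y {..<m}"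
proof -
  have "(\<Sum>s<r. (\<Sum>i<n. U $$ (i,s) * x i) * (\<Sum>j<m. V $$ (j,s) * y j))
      \<le> (\<Sum>s<r. \<bar>\<Sum>i<n. U $$ (i,s) * x i\<bar> * \<bar>\<Sum>j<m. V $$ (j,s) * y j\<bar>)"
    by (rule sum_mono) (simp flip: abs_mult)
  also have "\<dots> \<le> L2_set (\<lambda>s. \<Sum>i<n. U $$ (i,s) * x i) {..<r} * L2_set (\<lambda>s. \<Sum>j<m. V $$ (j,s) * y j) {..<r}"
    by (rule L2_set_mult_ineq)
  also have "\<dots> \<le> L2_set x {..<n} * L2_set y {..<m}"
    by (intro mult_mono orthonormal_columns_bessel U V L2_set_nonneg)
  finally show ?thesis .
qed

lemma trace_norm_le_sum_rank_one:
  fixes M :: "real mat"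
  assumes M: "M \<in> carrier_mat n m" and T: "finite T" and c: "\<And>t. t \<in> T \<Longrightarrow> c t \<ge> 0"
    and M_eq: "\<And>i j. i < n \<Longrightarrow> j < m \<Longrightarrow> M $$ (i,j) = (\<Sum>t\<in>T. c t * x t i * y t j)"
  shows "trace_norm M \<le> (\<Sum>t\<in>T. c t * L2_set (x t) {..<n} * L2_set (y t) {..<m})"
proof -
  obtain U S V where svd: "some_svd M = (U,S,V)" by (cases "some_svd M")
  obtain r where U: "U \<in> carrier_mat n r" "transpose_mat U * U = 1\<^sub>m r"
    and V: "V \<in> carrier_mat m r" "transpose_mat V * V = 1\<^sub>m r"
    and S: "S \<in> carrier_mat r r" and USV: "M = U * S * transpose_mat V"
    using compact_svd_some_svd[OF M svd] M by (elim compact_svdE) auto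
  have "trace_norm M = (\<Sum>s<r. S $$ (s,s))"
    unfolding trace_norm_def svd using S by simp
  also have "\<dots> = (\<Sum>s<r. \<Sum>i<n. \<Sum>j<m. U $$ (i,s) * M $$ (i,j) * V $$ (j,s))"
    unfolding USV by (intro sum.cong refl singular_value_eq_sum[OF U V S]) simp
  also have "\<dots> = (\<Sum>t\<in>T. c t * (\<Sum>s<r. (\<Sum>i<n. U $$ (i,s) * x t i) * (\<Sum>j<m. V $$ (j,s) * y t j)))"
  proof -
    have "(\<Sum>s<r. \<Sum>i<n. \<Sum>j<m. U $$ (i,s) * M $$ (i,j) * V $$ (j,s))
        = (\<Sum>s<r. \<Sum>i<n. \<Sum>j<m. \<Sum>t\<in>T. c t * ((U $$ (i,s) * x t i) * (V $$ (j,s) * y t j)))"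
      by (intro sum.cong refl) (simp add: M_eq sum_distrib_left sum_distrib_right mult_ac)
    also have "\<dots> = (\<Sum>t\<in>T. \<Sum>s<r. \<Sum>i<n. \<Sum>j<m. c t * ((U $$ (i,s) * x t i) * (V $$ (j,s) * y t j)))"
      by (simp add: sum.swap[of _ _ T])
    also have "\<dots> = (\<Sum>t\<in>T. c t * (\<Sum>s<r. (\<Sum>i<n. U $$ (i,s) * x t i) * (\<Sum>j<m. V $$ (j,s) * y t j)))"
      by (simp only: sum_product) (simp add: sum_distrib_left)
    finally show ?thesis .
  qed
  also have "\<dots> \<le> (\<Sum>t\<in>T. c t * (L2_set (x t) {..<n} * L2_set (y t) {..<m}))"
    by (intro sum_mono mult_left_mono c orthonormal_columns_coeff_prod_le U V)
  finally show ?thesis by (simp add: mult.assoc)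
qed

lemma L2_set_mult_le:
  assumes "0 \<le> c" and "\<And>i. i \<in> A \<Longrightarrow> \<bar>f i\<bar> \<le> c"
  shows "L2_set (\<lambda>i. f i * g i) A \<le> c * L2_set g A"
proof -
  have "L2_set (\<lambda>i. f i * g i) A = L2_set (\<lambda>i. \<bar>f i\<bar> * \<bar>g i\<bar>) A"
    by (simp add: L2_set_def power_mult_distrib)
  also have "\<dots> \<le> L2_set (\<lambda>i. c * \<bar>g i\<bar>) A"
    by (rule L2_set_mono) (auto intro: mult_right_mono assms(2))
  also have "\<dots> = c * L2_set g A"
    using L2_set_right_distrib[OF assms(1), of "\<lambda>i. \<bar>g i\<bar>" A] by (simp add: L2_set_def)
  finally show ?thesis .
qed

lemma L2_set_orthonormal_column:
  fixes U :: "real mat"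
  assumes "U \<in> carrier_mat n r" and "transpose_mat U * U = 1\<^sub>m r" and "k < r"
  shows "L2_set (\<lambda>i. U $$ (i,k)) {..<n} = 1"
proof -
  have "(\<Sum>i<n. (U $$ (i,k))\<^sup>2) = (transpose_mat U * U) $$ (k,k)"
    using assms(1,3) by (simp add: scalar_prod_def atLeast0LessThan power2_eq_square)
  then show ?thesis using assms(2,3) by (simp add: L2_set_def)
qed

lemma L2_set_mult_orthonormal_column_le:
  fixes U :: "real mat"
  assumes "U \<in> carrier_mat n r" and "transpose_mat U * U = 1\<^sub>m r" and "l < r"
    and "0 \<le> \<mu>" and "\<And>i. i < n \<Longrightarrow> \<bar>f i\<bar> \<le> \<mu>"
  shows "L2_set (\<lambda>i. f i * U $$ (i,l)) {..<n} \<le> \<mu>"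
  using L2_set_mult_le[of \<mu> "{..<n}" f "\<lambda>i. U $$ (i,l)"] L2_set_orthonormal_column[OF assms(1-3)] assms(4,5)
  by simp

lemma abs_entry_le_row_norm:
  assumes "k < dim_col U"
  shows "\<bar>U $$ (i,k)\<bar> \<le> row_norm U i"
proof -
  have "row_norm U i = L2_set (\<lambda>j. \<bar>U $$ (i,j)\<bar>) {..<dim_col U}"
    by (simp add: row_norm_def L2_set_def)
  then show ?thesis using member_le_L2_set[of "{..<dim_col U}" k] assms by simp
qed

lemma row_norm_le_coherence:
  assumes "some_svd M = (U,S,V)"
  shows "i < dim_row U \<Longrightarrow> row_norm U i \<le> coherence M"
    and "j < dim_row V \<Longrightarrow> row_norm V j \<le> coherence M"
  using assms by (auto simp: coherence_def intro!: Max_ge)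

lemma coherence_nonneg: "coherence M \<ge> 0"
  by (auto simp: coherence_def split: prod.split intro!: Max_ge)

lemma compact_svd_entry:
  assumes "compact_svd M U S V" and "M \<in> carrier_mat n m" and "U \<in> carrier_mat n r"
    and "i < n" and "j < m"
  shows "M $$ (i,j) = (\<Sum>k<r. S $$ (k,k) * U $$ (i,k) * V $$ (j,k))"
proof -
  obtain r' where "U \<in> carrier_mat n r'" "V \<in> carrier_mat m r'" "S \<in> carrier_mat r' r'"
    "diagonal_mat S" "M = U * S * transpose_mat V"
    using assms(1,2) by (elim compact_svdE)
  moreover have "r' = r" using assms(3) \<open>U \<in> carrier_mat n r'\<close> by auto
  ultimately show ?thesis
    using diagonal_mat_sandwich_entry[of U n r V m S i j] assms(4,5) by (simp add: mult_ac)
qed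

lemma trace_norm_hadamard_le:
  fixes A B P Sa Qa X Sb Y :: "real mat"
  assumes A: "A \<in> carrier_mat n m" "compact_svd A P Sa Qa"
    and B: "B \<in> carrier_mat n m" "compact_svd B X Sb Y"
    and mu: "0 \<le> \<mu>" "\<And>i k. i < n \<Longrightarrow> k < dim_col P \<Longrightarrow> \<bar>P $$ (i,k)\<bar> \<le> \<mu>"
      "\<And>j k. j < m \<Longrightarrow> k < dim_col Qa \<Longrightarrow> \<bar>Qa $$ (j,k)\<bar> \<le> \<mu>"
  shows "trace_norm (hadamard A B) \<le> \<mu>\<^sup>2 * (\<Sum>k<dim_row Sa. Sa $$ (k,k)) * (\<Sum>l<dim_row Sb. Sb $$ (l,l))"
proof -
  obtain rA where P: "P \<in> carrier_mat n rA" and Qa: "Qa \<in> carrier_mat m rA" and Sa: "Sa \<in> carrier_mat rA rA"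
    and Sa_pos: "\<forall>k<rA. Sa $$ (k,k) > 0"
    using A by (elim compact_svdE) auto
  obtain rB where X: "X \<in> carrier_mat n rB" "transpose_mat X * X = 1\<^sub>m rB"
    and Y: "Y \<in> carrier_mat m rB" "transpose_mat Y * Y = 1\<^sub>m rB" and Sb: "Sb \<in> carrier_mat rB rB"
    and Sb_pos: "\<forall>l<rB. Sb $$ (l,l) > 0"
    using B by (elim compact_svdE) auto
  define T where "T = {..<rA} \<times> {..<rB}"
  define c where "c = (\<lambda>(k,l). Sa $$ (k,k) * Sb $$ (l,l))"
  define x where "x = (\<lambda>(k,l) i. P $$ (i,k) * X $$ (i,l))"
  define y where "y = (\<lambda>(k,l) j. Qa $$ (j,k) * Y $$ (j,l))"
  have H: "hadamard A B \<in> carrier_mat n m" using A unfolding hadamard_def by auto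
  have "hadamard A B $$ (i,j) = (\<Sum>t\<in>T. c t * x t i * y t j)" if "i < n" "j < m" for i j
  proof -
    have "hadamard A B $$ (i,j) = A $$ (i,j) * B $$ (i,j)"
      using A that unfolding hadamard_def by auto
    also have "\<dots> = (\<Sum>k<rA. Sa $$ (k,k) * P $$ (i,k) * Qa $$ (j,k)) * (\<Sum>l<rB. Sb $$ (l,l) * X $$ (i,l) * Y $$ (j,l))"
      using compact_svd_entry[OF A(2,1) P that] compact_svd_entry[OF B(2,1) X(1) that] by simp
    also have "\<dots> = (\<Sum>t\<in>T. c t * x t i * y t j)"
      unfolding sum_product T_def sum.cartesian_product c_def x_def y_def
      by (rule sum.cong) (auto simp: mult_ac)
    finally show ?thesis .
  qed
  then have "trace_norm (hadamard A B) \<le> (\<Sum>t\<in>T. c t * L2_set (x t) {..<n} * L2_set (y t) {..<m})"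
    by (intro trace_norm_le_sum_rank_one[OF H]) (auto simp: T_def c_def less_imp_le Sa_pos Sb_pos mult_nonneg_nonneg)
  also have "\<dots> \<le> (\<Sum>t\<in>T. c t * \<mu> * \<mu>)"
  proof (rule sum_mono)
    fix t assume "t \<in> T"
    then obtain k l where t: "t = (k,l)" "k < rA" "l < rB" unfolding T_def by auto
    have x_le: "L2_set (x t) {..<n} \<le> \<mu>"
      unfolding t x_def prod.case
      by (rule L2_set_mult_orthonormal_column_le[OF X t(3) mu(1)]) (use mu(2) P t in auto)
    have y_le: "L2_set (y t) {..<m} \<le> \<mu>"
      unfolding t y_def prod.case
      by (rule L2_set_mult_orthonormal_column_le[OF Y t(3) mu(1)]) (use mu(3) Qa t in auto)
    have "L2_set (x t) {..<n} * L2_set (y t) {..<m} \<le> \<mu> * \<mu>"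
      by (rule mult_mono) (use x_le y_le mu(1) in auto)
    moreover have "c t \<ge> 0" using Sa_pos Sb_pos t unfolding c_def by (simp add: less_imp_le)
    ultimately show "c t * L2_set (x t) {..<n} * L2_set (y t) {..<m} \<le> c t * \<mu> * \<mu>"
      by (simp add: mult.assoc mult_left_mono)
  qed
  also have "\<dots> = \<mu>\<^sup>2 * (\<Sum>t\<in>T. c t)"
    by (simp add: sum_distrib_left power2_eq_square mult_ac)
  also have "(\<Sum>t\<in>T. c t) = (\<Sum>k<rA. Sa $$ (k,k)) * (\<Sum>l<rB. Sb $$ (l,l))"
    unfolding T_def c_def sum_product sum.cartesian_product ..
  finally show ?thesis using Sa Sb by simp
qed

theorem lemma3:
  fixes A B :: "real mat" and n m :: nat
  assumes "A \<in> carrier_mat n m" and "B \<in> carrier_mat n m"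
  shows "trace_norm (hadamard A B) \<le> (coherence A)\<^sup>2 * trace_norm A * trace_norm B"
proof -
  obtain P Sa Qa where sa: "some_svd A = (P,Sa,Qa)" by (cases "some_svd A")
  obtain X Sb Y where sb: "some_svd B = (X,Sb,Y)" by (cases "some_svd B")
  have svd_A: "compact_svd A P Sa Qa" and svd_B: "compact_svd B X Sb Y"
    using compact_svd_some_svd assms sa sb by blast+
  then have dims: "dim_row P = n" "dim_row Qa = m"
    using assms(1) by (auto elim: compact_svdE)
  have "\<bar>P $$ (i,k)\<bar> \<le> coherence A" if "i < n" "k < dim_col P" for i k
    by (rule order_trans[OF abs_entry_le_row_norm[OF that(2)] row_norm_le_coherence(1)[OF sa]])
      (simp add: dims that)
  moreover have "\<bar>Qa $$ (j,k)\<bar> \<le> coherence A" if "j < m" "k < dim_col Qa" for j k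
    by (rule order_trans[OF abs_entry_le_row_norm[OF that(2)] row_norm_le_coherence(2)[OF sa]])
      (simp add: dims that)
  ultimately show ?thesis
    using trace_norm_hadamard_le[OF assms(1) svd_A assms(2) svd_B coherence_nonneg]
    unfolding trace_norm_def sa sb by simp
qed

end
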